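(* Let $P$ be the unit-volume right prism over an equilateral triangle that is circumscribed about a sphere (i.e. all five faces are tangent to a common sphere), and let $Q$ be any unit-volume quadrilateral pyramid. Then the surface area of $P$ is strictly less than the surface area of $Q$.
   Context: A right prism over a triangle has two parallel congruent triangular faces related by a translation perpendicular to their planes, and three rectangular side faces. *)

theory Defs
  imports "HOL-Analysis.Analysis"
begin

(* Area of a planar polygon given by its vertices in cyclic order
   (shoelace / vector-area formula): half the norm of sum of v_i x v_(i+1). *)
definition polygon_area :: "(real^3) list \<Rightarrow> real" where
  "polygon_area vs = norm (\<Sum>i<length vs. cross3 (vs ! i) (vs ! ((i + 1) mod length vs))) / 2"

definition surface_area :: "(real^3) list list \<Rightarrow> real" where
  "surface_area fs = (\<Sum>f\<leftarrow>fs. polygon_area f)"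

definition solid_volume :: "(real^3) set \<Rightarrow> real" where
  "solid_volume S = measure lborel S"

definition circumscribed_about_sphere :: "(real^3) set \<Rightarrow> (real^3) list list \<Rightarrow> bool" where
  "circumscribed_about_sphere P fs \<longleftrightarrow>
     (\<exists>c r. r > 0 \<and> cball c r \<subseteq> P \<and>
        (\<forall>f\<in>set fs. sphere c r \<inter> convex hull (set f) \<noteq> {}))"

definition prism_vertices :: "real \<Rightarrow> real \<Rightarrow> (real^3) list \<times> (real^3) list" where
  "prism_vertices a h =
     ([vector [0, 0, 0], vector [a, 0, 0], vector [a / 2, a * sqrt 3 / 2, 0]],
      [vector [0, 0, h], vector [a, 0, h], vector [a / 2, a * sqrt 3 / 2, h]])"

definition prism_faces :: "real \<Rightarrow> real \<Rightarrow> (real^3) list list" where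
  "prism_faces a h =
     (let (B, T) = prism_vertices a h in
       [B, T,
        [B!0, B!1, T!1, T!0], [B!1, B!2, T!2, T!1], [B!2, B!0, T!0, T!2]])"

definition prism_solid :: "real \<Rightarrow> real \<Rightarrow> (real^3) set" where
  "prism_solid a h = convex hull (set (fst (prism_vertices a h)) \<union> set (snd (prism_vertices a h)))"

(* Quadrilateral pyramid with apex p over the base v0 v1 v2 v3 (in cyclic order):
   base is a planar convex quadrilateral (coplanar, affinely 2-dimensional,
   diagonals cross), apex not in the base plane. *)
definition quad_pyramid :: "real^3 \<Rightarrow> real^3 \<Rightarrow> real^3 \<Rightarrow> real^3 \<Rightarrow> real^3 \<Rightarrow> bool" where
  "quad_pyramid p v0 v1 v2 v3 \<longleftrightarrow>
     aff_dim {v0, v1, v2, v3} = 2 \<and>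
     open_segment v0 v2 \<inter> open_segment v1 v3 \<noteq> {} \<and>
     p \<notin> affine hull {v0, v1, v2, v3}"

definition pyramid_faces :: "real^3 \<Rightarrow> real^3 \<Rightarrow> real^3 \<Rightarrow> real^3 \<Rightarrow> real^3 \<Rightarrow> (real^3) list list" where
  "pyramid_faces p v0 v1 v2 v3 =
     [[v0, v1, v2, v3], [p, v0, v1], [p, v1, v2], [p, v2, v3], [p, v3, v0]]"

definition pyramid_solid :: "real^3 \<Rightarrow> real^3 \<Rightarrow> real^3 \<Rightarrow> real^3 \<Rightarrow> real^3 \<Rightarrow> (real^3) set" where
  "pyramid_solid p v0 v1 v2 v3 = convex hull {p, v0, v1, v2, v3}"

end

theory Submission
  imports Defs
begin

(*
  With an inscribed sphere of radius r, tangency to the two triangles gives h = 2r and tangency to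
  the three rectangles makes r the inradius a sqrt 3 / 6 of the base, so h = a sqrt 3 / 3. The prism
  then has volume a^3 / 4 and surface 3 sqrt 3 / 2 a^2, and unit volume bounds the cube of its
  surface by 162 sqrt 3 < 288.

  Let the pyramid have base area B and height H. Its crossing diagonals cut it into two tetrahedra,
  so unit volume gives B H >= 3. Each lateral face has area sqrt (A^2 + (H l / 2)^2), where A is the
  area of its projection to the base plane and l its base edge; the projections add up to the base,
  so by Minkowski's inequality the lateral area is at least sqrt (B^2 + (H L / 2)^2) with L the
  perimeter of the base. The isoperimetric inequality L^2 >= 16 B for quadrilaterals bounds the
  surface from below by B + sqrt (B^2 + 4 B H^2), whose cube is at least 32 (B H)^2 >= 288.
*)

unbundle cross3_syntax

lemma sum_lessThan_3: "(\<Sum>i<3. f i) = f 0 + f 1 + f (2::nat)"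
  by (simp add: eval_nat_numeral)

lemma sum_lessThan_4: "(\<Sum>i<4. f i) = f 0 + f 1 + f 2 + f (3::nat)"
  by (simp add: eval_nat_numeral)

lemma polygon_area_triangle: "polygon_area [a, b, c] = norm ((b - a) \<times> (c - a)) / 2"
proof -
  have "a \<times> b + b \<times> c + c \<times> a = (b - a) \<times> (c - a)"
    by (simp add: cross3_def vec_eq_iff forall_3 algebra_simps)
  then show ?thesis
    unfolding polygon_area_def by (simp only: list.size sum_lessThan_3) simp
qed

lemma polygon_area_quadrilateral: "polygon_area [a, b, c, d] = norm ((c - a) \<times> (d - b)) / 2"
proof -
  have "a \<times> b + b \<times> c + c \<times> d + d \<times> a = (c - a) \<times> (d - b)"
    by (simp add: cross3_def vec_eq_iff forall_3 algebra_simps)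
  then show ?thesis
    unfolding polygon_area_def by (simp only: list.size sum_lessThan_4) simp
qed

lemma vector_3_diff: "vector [a, b, c] - vector [d, e, f] = (vector [a - d, b - e, c - f] :: real^3)"
  by (simp add: vec_eq_iff forall_3)

lemma cross3_vector:
  "vector [a, b, c] \<times> vector [d, e, f] = vector [b * f - c * e, c * d - a * f, a * e - b * d]"
  by (simp add: cross3_def vec_eq_iff forall_3)

lemma inner_vector_3: "vector [a, b, c] \<bullet> (x :: real^3) = a * x$1 + b * x$2 + c * x$3"
  by (simp add: inner_vec_def sum_3)

lemma norm_vector_3: "norm (vector [a, b, c] :: real^3) = sqrt (a\<^sup>2 + b\<^sup>2 + c\<^sup>2)"
  by (simp add: norm_eq_sqrt_inner inner_vector_3 power2_eq_square)

lemma norm_cross_le: "norm (x \<times> y) \<le> norm x * norm y"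
proof -
  have "(norm (x \<times> y))\<^sup>2 \<le> (norm x * norm y)\<^sup>2"
    using norm_cross_dot[of x y] zero_le_power2[of "x \<bullet> y"] by linarith
  then show ?thesis
    by (rule power2_le_imp_le) simp
qed

lemma quadrilateral_isoperimetric:
  "16 * polygon_area [a0, a1, a2, a3] \<le> (dist a0 a1 + dist a1 a2 + dist a2 a3 + dist a3 a0)\<^sup>2"
proof -
  define l0 l1 l2 l3 where l_def: "l0 = dist a0 a1" "l1 = dist a1 a2" "l2 = dist a2 a3" "l3 = dist a3 a0"
  have edges: "2 *\<^sub>R ((a2 - a0) \<times> (a3 - a1)) =
      (a1 - a0) \<times> (a2 - a1) + (a2 - a1) \<times> (a3 - a2) + (a3 - a2) \<times> (a0 - a3) + (a0 - a3) \<times> (a1 - a0)"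
    by (simp add: cross3_def vec_eq_iff forall_3 algebra_simps)
  have "4 * polygon_area [a0, a1, a2, a3] = norm (2 *\<^sub>R ((a2 - a0) \<times> (a3 - a1)))"
    by (simp add: polygon_area_quadrilateral)
  also have "\<dots> \<le> l1 * l0 + l2 * l1 + l3 * l2 + l0 * l3"
    unfolding edges l_def dist_norm
    by (intro norm_triangle_le add_mono norm_cross_le[THEN order_trans])
      (simp_all add: norm_minus_commute)
  also have "\<dots> \<le> (l0 + l1 + l2 + l3)\<^sup>2 / 4"
    using sum_squares_ge_zero[of "l0 + l2 - l1 - l3" 0]
    by (simp add: power2_eq_square algebra_simps)
  finally show ?thesis
    by (simp add: l_def)
qed

lemma measure_lebesgue_compact:
  fixes S :: "'a::euclidean_space set"
  assumes "compact S"
  shows "measure lebesgue S = measure lborel S"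
  using assms by (intro measure_completion) (auto dest: compact_imp_closed)

(* Unlike content_simplex, this needs no distinctness of the vertices. *)
lemma measure_convex_hull_tetrahedron:
  fixes A B C D :: "real^3"
  shows "measure lborel (convex hull {A, B, C, D}) = \<bar>((B - A) \<times> (C - A)) \<bullet> (D - A)\<bar> / 6"
proof -
  define M :: "real^3^3" where "M = (\<chi> i j. (if j = 1 then B else if j = 2 then C else D) $ i - A $ i)"
  define g where "g = (\<lambda>x. M *v x)"
  define std where "std = (convex hull insert 0 Basis :: (real^3) set)"
  have [simp]: "M *v axis i 1 = (if i = 1 then B - A else if i = 2 then C - A else D - A)" for i
    by (auto simp: M_def matrix_vector_mult_basis column_def vec_eq_iff)
  have std: "compact std"
    unfolding std_def by (intro finite_imp_compact_convex_hull) auto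
  have basis: "Basis = {axis 1 1, axis 2 1, axis 3 1 :: real^3}"
    by (auto simp: Basis_vec_def Basis_real_def UNIV_3)
  have "(+) (- A) ` {A, B, C, D} = {0, B - A, C - A, D - A}"
    by auto
  then have "measure lebesgue (convex hull {A, B, C, D}) = measure lebesgue (convex hull {0, B - A, C - A, D - A})"
    by (metis measure_translation convex_hull_translation)
  also have "{0, B - A, C - A, D - A} = g ` insert 0 Basis"
    unfolding basis by (simp add: g_def)
  also have "convex hull (g ` insert 0 Basis) = g ` std"
    unfolding std_def by (rule convex_hull_linear_image[symmetric]) (simp add: g_def)
  also have "measure lebesgue (g ` std) = \<bar>det M\<bar> * measure lebesgue std"
    using std by (subst measure_lebesgue_linear_transformation)
      (auto intro: finite_imp_bounded_convex_hull dest: compact_imp_closed simp: g_def std_def)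
  also have "measure lebesgue std = 1 / 6"
    using std by (simp add: measure_lebesgue_compact std_def content_std_simplex fact_numeral)
  also have "det M = ((B - A) \<times> (C - A)) \<bullet> (D - A)"
    by (simp add: det_3 M_def cross3_def inner_vec_def sum_3 algebra_simps)
  finally show ?thesis
    by (simp add: measure_lebesgue_compact finite_imp_compact_convex_hull)
qed

lemma negligible_Int_halfspaces:
  fixes w :: "'a::euclidean_space"
  assumes "S \<subseteq> {x. w \<bullet> x \<le> b}" "T \<subseteq> {x. w \<bullet> x \<ge> b}" "b \<noteq> 0"
  shows "negligible (S \<inter> T)"
  using assms by (intro negligible_subset[OF negligible_hyperplane[of w b]]) (auto intro: order_antisym)

lemma convex_hull_pyramid_split:
  fixes p v0 v1 v2 v3 z :: "'a::euclidean_space"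
  assumes "z \<in> closed_segment v0 v2" "z \<in> closed_segment v1 v3"
  shows "convex hull {p, v0, v1, v2, v3} \<subseteq> convex hull {p, v0, v1, v2} \<union> convex hull {p, v0, v2, v3}"
proof
  fix x assume "x \<in> convex hull {p, v0, v1, v2, v3}"
  also have "convex hull {p, v0, v1, v2, v3} = convex hull (convex hull {p, v0, v2} \<union> closed_segment v1 v3)"
  proof -
    have "{p, v0, v1, v2, v3} = {p, v0, v2} \<union> {v1, v3}"
      by auto
    then show ?thesis
      unfolding segment_convex_hull by (metis hull_Un_left hull_Un_right)
  qed
  finally obtain u v k m where
    x: "x = u *\<^sub>R k + v *\<^sub>R m" "u \<ge> 0" "v \<ge> 0" "u + v = 1"
    and k: "k \<in> convex hull {p, v0, v2}" and m: "m \<in> closed_segment v1 v3"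
    by (subst (asm) convex_hull_union_two) auto
  have base: "convex hull {p, v0, v2} \<subseteq> convex hull {p, v0, v1, v2} \<inter> convex hull {p, v0, v2, v3}"
    and diagonal: "closed_segment v0 v2 \<subseteq> convex hull {p, v0, v1, v2} \<inter> convex hull {p, v0, v2, v3}"
    unfolding segment_convex_hull by (intro Int_greatest hull_mono; blast)+
  from m assms(2) consider "m \<in> closed_segment v1 z" | "m \<in> closed_segment z v3"
    using Un_closed_segment by blast
  then show "x \<in> convex hull {p, v0, v1, v2} \<union> convex hull {p, v0, v2, v3}"
  proof cases
    case 1
    have "closed_segment v1 z \<subseteq> convex hull {p, v0, v1, v2}"
      using assms(1) diagonal by (intro closed_segment_subset) (auto intro: hull_inc)
    with 1 k base x(2-4) show ?thesis
      unfolding x(1) by (intro UnI1 convexD) auto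
  next
    case 2
    have "closed_segment z v3 \<subseteq> convex hull {p, v0, v2, v3}"
      using assms(1) diagonal by (intro closed_segment_subset) (auto intro: hull_inc)
    with 2 k base x(2-4) show ?thesis
      unfolding x(1) by (intro UnI2 convexD) auto
  qed
qed

lemma measure_pyramid_le:
  fixes p v0 v1 v2 v3 z :: "real^3"
  assumes "z \<in> closed_segment v0 v2" "z \<in> closed_segment v1 v3"
  shows "measure lborel (convex hull {p, v0, v1, v2, v3}) \<le> \<bar>((v2 - v0) \<times> (v3 - v1)) \<bullet> (p - v0)\<bar> / 6"
proof -
  define D where "D = (v2 - v0) \<times> (v3 - v1)"
  define T1 where "T1 = convex hull {v0, v1, v2, p}"
  define T2 where "T2 = convex hull {v0, v2, v3, p}"
  obtain \<mu> where \<mu>: "z = (1 - \<mu>) *\<^sub>R v0 + \<mu> *\<^sub>R v2"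
    using assms(1) by (auto simp: in_segment)
  obtain \<kappa> where \<kappa>: "0 \<le> \<kappa>" "\<kappa> \<le> 1" "z = (1 - \<kappa>) *\<^sub>R v1 + \<kappa> *\<^sub>R v3"
    using assms(2) by (auto simp: in_segment)
  \<comment> \<open>the diagonal from v0 to v2 cuts the pyramid into T1 and T2, in volume ratio \<kappa> : 1 - \<kappa>\<close>
  have v1: "v1 - v0 = \<mu> *\<^sub>R (v2 - v0) - \<kappa> *\<^sub>R (v3 - v1)"
    using \<mu> \<kappa>(3) by (simp add: algebra_simps)
  have T1_cross: "(v1 - v0) \<times> (v2 - v0) = \<kappa> *\<^sub>R D"
    unfolding v1 D_def by (simp add: cross3_def vec_eq_iff forall_3 algebra_simps)
  have v3: "v3 - v0 = \<mu> *\<^sub>R (v2 - v0) + (1 - \<kappa>) *\<^sub>R (v3 - v1)"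
    using \<mu> \<kappa>(3) by (simp add: algebra_simps)
  have T2_cross: "(v2 - v0) \<times> (v3 - v0) = (1 - \<kappa>) *\<^sub>R D"
    unfolding v3 D_def by (simp add: cross3_def vec_eq_iff forall_3 algebra_simps)
  have compact: "compact T1" "compact T2"
    unfolding T1_def T2_def by (auto intro: finite_imp_compact_convex_hull)
  have "convex hull {p, v0, v1, v2, v3} \<subseteq> T1 \<union> T2"
    using convex_hull_pyramid_split[OF assms] by (simp add: T1_def T2_def insert_commute)
  then have "measure lborel (convex hull {p, v0, v1, v2, v3}) \<le> measure lborel (T1 \<union> T2)"
    using compact by (intro measure_mono_fmeasurable)
      (auto intro: fmeasurable_compact borel_closed compact_imp_closed finite_imp_compact_convex_hull)
  also have "\<dots> \<le> measure lborel T1 + measure lborel T2"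
    using compact by (intro measure_Un_le) (auto intro: borel_closed compact_imp_closed)
  also have "\<dots> = \<kappa> * \<bar>D \<bullet> (p - v0)\<bar> / 6 + (1 - \<kappa>) * \<bar>D \<bullet> (p - v0)\<bar> / 6"
    using \<kappa>(1,2) by (simp add: T1_def T2_def measure_convex_hull_tetrahedron T1_cross T2_cross abs_mult)
  finally show ?thesis
    by (simp add: D_def add_divide_distrib[symmetric] algebra_simps)
qed

lemma surface_area_prism:
  assumes "a \<ge> 0" "h \<ge> 0"
  shows "surface_area (prism_faces a h) = sqrt 3 / 2 * a\<^sup>2 + 3 * a * h"
proof -
  have "sqrt ((a * h * sqrt 3)\<^sup>2 + (a * h)\<^sup>2) = 2 * a * h"
    using assms by (intro real_sqrt_unique) (simp_all add: power_mult_distrib)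
  then show ?thesis
    using assms
    by (simp add: surface_area_def prism_faces_def prism_vertices_def polygon_area_triangle
        polygon_area_quadrilateral vector_3_diff cross3_vector norm_vector_3 power_mult_distrib
        real_sqrt_mult algebra_simps) (simp add: power2_eq_square)
qed

lemma inner_eq_of_sphere_touching_halfspace:
  fixes c w y :: "'a::real_inner"
  assumes "cball c r \<subseteq> {x. w \<bullet> x \<le> b}" "norm w = 1" "y \<in> sphere c r" "w \<bullet> y = b"
  shows "w \<bullet> c = b - r"
proof -
  have r: "r \<ge> 0"
    using assms(3) by auto
  have "c + r *\<^sub>R w \<in> cball c r"
    using assms(2) r by (simp add: dist_norm)
  then have "w \<bullet> c + r \<le> b"
    using assms(1,2) by (auto simp: inner_add_right norm_eq_1)
  moreover have "b - w \<bullet> c \<le> r"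
    using norm_cauchy_schwarz[of w "y - c"] assms(2-4) by (simp add: inner_diff_right dist_norm norm_minus_commute)
  ultimately show ?thesis
    by linarith
qed

lemma prism_height_of_circumscribed:
  assumes "a \<ge> 0" "h \<ge> 0" "circumscribed_about_sphere (prism_solid a h) (prism_faces a h)"
  shows "h = a * sqrt 3 / 3"
proof -
  obtain c r where r: "r > 0" and ball: "cball c r \<subseteq> prism_solid a h"
    and touch: "\<And>f. f \<in> set (prism_faces a h) \<Longrightarrow> sphere c r \<inter> convex hull (set f) \<noteq> {}"
    using assms(3) unfolding circumscribed_about_sphere_def by blast
  have tangent: "w \<bullet> c = b - r"
    if unit: "norm w = 1"
      and below: "\<forall>v \<in> set (fst (prism_vertices a h)) \<union> set (snd (prism_vertices a h)). w \<bullet> v \<le> b"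
      and on_face: "\<forall>v \<in> set f. w \<bullet> v = b" and face: "f \<in> set (prism_faces a h)" for w b f
  proof -
    have "prism_solid a h \<subseteq> {x. w \<bullet> x \<le> b}"
      unfolding prism_solid_def using below by (intro hull_minimal) (auto simp: convex_halfspace_le)
    moreover obtain y where "y \<in> sphere c r" "y \<in> convex hull (set f)"
      using touch[OF face] by blast
    moreover have "convex hull (set f) \<subseteq> {x. w \<bullet> x = b}"
      using on_face by (intro hull_minimal) (auto simp: convex_hyperplane)
    ultimately show ?thesis
      using ball unit by (intro inner_eq_of_sphere_touching_halfspace[of c r w b y]) auto
  qed
  have "sqrt 3 * sqrt 3 = 3"
    by simp
  then have "- c$3 = - r" "c$3 = h - r" "- c$2 = - r"
    "sqrt 3 / 2 * c$1 + c$2 / 2 = a * sqrt 3 / 2 - r" "- sqrt 3 / 2 * c$1 + c$2 / 2 = - r"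
    using assms(1,2)
      tangent[of "vector [0, 0, -1]" 0 "prism_faces a h ! 0"]
      tangent[of "vector [0, 0, 1]" h "prism_faces a h ! 1"]
      tangent[of "vector [0, -1, 0]" 0 "prism_faces a h ! 2"]
      tangent[of "vector [sqrt 3 / 2, 1 / 2, 0]" "a * sqrt 3 / 2" "prism_faces a h ! 3"]
      tangent[of "vector [- sqrt 3 / 2, 1 / 2, 0]" 0 "prism_faces a h ! 4"]
    by (simp_all add: prism_vertices_def prism_faces_def inner_vector_3 norm_vector_3 power_divide
        field_simps)
  then show ?thesis
    by (simp add: field_simps)
qed

lemma solid_volume_prism_ge:
  assumes "a > 0" "h > 0"
  shows "sqrt 3 / 4 * a\<^sup>2 * h \<le> solid_volume (prism_solid a h)"
proof -
  define P0 P1 P2 Q0 Q1 Q2 :: "real^3" where vertices: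
    "P0 = vector [0, 0, 0]" "P1 = vector [a, 0, 0]" "P2 = vector [a / 2, a * sqrt 3 / 2, 0]"
    "Q0 = vector [0, 0, h]" "Q1 = vector [a, 0, h]" "Q2 = vector [a / 2, a * sqrt 3 / 2, h]"
  define T1 T2 T3 where tetrahedra:
    "T1 = convex hull {P0, P1, P2, Q0}" "T2 = convex hull {P1, P2, Q0, Q1}"
    "T3 = convex hull {P2, Q0, Q1, Q2}"
  have solid: "prism_solid a h = convex hull {P0, P1, P2, Q0, Q1, Q2}"
    by (simp add: prism_solid_def prism_vertices_def vertices insert_commute)
  have compact: "compact T1" "compact T2" "compact T3" "compact (prism_solid a h)"
    unfolding tetrahedra solid by (auto intro: finite_imp_compact_convex_hull)
  have sqrt3: "sqrt 3 * sqrt 3 = 3"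
    by simp
  define n n' :: "real^3" where "n = vector [h * sqrt 3, h, a * sqrt 3]" and "n' = vector [0, 2 * h, a * sqrt 3]"
  have ahs: "a * h * sqrt 3 \<noteq> 0"
    using assms by simp
  have "T1 \<subseteq> {x. n \<bullet> x \<le> a * h * sqrt 3}" "T2 \<union> T3 \<subseteq> {x. n \<bullet> x \<ge> a * h * sqrt 3}"
    "T2 \<subseteq> {x. n' \<bullet> x \<le> a * h * sqrt 3}" "T3 \<subseteq> {x. n' \<bullet> x \<ge> a * h * sqrt 3}"
    unfolding tetrahedra Un_subset_iff
    by (intro conjI hull_minimal convex_halfspace_le convex_halfspace_ge;
        use assms sqrt3 in \<open>simp add: vertices n_def n'_def inner_vector_3 algebra_simps\<close>)+
  then have "measure lebesgue (T1 \<union> T2 \<union> T3) = measure lebesgue T1 + measure lebesgue T2 + measure lebesgue T3"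
    using compact ahs
    by (intro measure_Un3_negligible)
      (blast intro: lmeasurable_compact negligible_Int_halfspaces)+
  also have "\<dots> = sqrt 3 / 4 * a\<^sup>2 * h"
    using assms sqrt3 compact
    by (simp add: measure_lebesgue_compact tetrahedra measure_convex_hull_tetrahedron vertices
        vector_3_diff cross3_vector inner_vector_3 power2_eq_square algebra_simps)
  finally have "sqrt 3 / 4 * a\<^sup>2 * h = measure lebesgue (T1 \<union> T2 \<union> T3)" ..
  also have "\<dots> \<le> measure lebesgue (prism_solid a h)"
  proof (rule measure_mono_fmeasurable)
    show "T1 \<union> T2 \<union> T3 \<subseteq> prism_solid a h"
      unfolding tetrahedra solid by (intro Un_least hull_mono) auto
  qed (use compact in \<open>auto intro: fmeasurableD lmeasurable_compact compact_Un\<close>)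
  finally show ?thesis
    using compact by (simp add: solid_volume_def measure_lebesgue_compact)
qed

lemma cube_surface_area_circumscribed_prism_lt:
  assumes "a > 0" "h > 0" "solid_volume (prism_solid a h) = 1"
    and "circumscribed_about_sphere (prism_solid a h) (prism_faces a h)"
  shows "(surface_area (prism_faces a h))^3 < 288"
proof -
  have h: "h = a * sqrt 3 / 3"
    using prism_height_of_circumscribed assms(1,2,4) by simp
  have "sqrt 3 / 4 * a\<^sup>2 * h = sqrt 3 * sqrt 3 / 12 * a^3"
    unfolding h by (simp add: power2_eq_square power3_eq_cube)
  also have "\<dots> = a^3 / 4"
    by simp
  finally have "a^3 / 4 \<le> 1"
    using solid_volume_prism_ge[OF assms(1,2)] assms(3) by simp
  then have "(a^3)\<^sup>2 \<le> 4\<^sup>2"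
    using assms(1) by (intro power_mono) simp_all
  have "sqrt 3 < 16 / 9"
    by (rule real_less_lsqrt) (simp_all add: power2_eq_square)
  have "surface_area (prism_faces a h) = 3 * sqrt 3 / 2 * a\<^sup>2"
    using surface_area_prism assms(1,2) by (simp add: h power2_eq_square algebra_simps)
  also have "(3 * sqrt 3 / 2 * a\<^sup>2)^3 = 27 / 8 * (sqrt 3 * sqrt 3) * sqrt 3 * (a^3)\<^sup>2"
    by algebra
  also have "\<dots> \<le> 27 / 8 * 3 * sqrt 3 * 4\<^sup>2"
    using \<open>(a^3)\<^sup>2 \<le> 4\<^sup>2\<close> by simp
  also have "\<dots> < 288"
    using \<open>sqrt 3 < 16 / 9\<close> by simp
  finally show ?thesis .
qed

lemma norm_mult_norm_cross_apex:
  assumes "w \<bullet> a = c" "w \<bullet> b = c"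
  shows "norm w * norm ((a - p) \<times> (b - p)) =
         sqrt ((w \<bullet> ((a - p) \<times> (b - p)))\<^sup>2 + (\<bar>w \<bullet> p - c\<bar> * dist a b)\<^sup>2)"
proof -
  have "w \<times> ((a - p) \<times> (b - p)) = (c - w \<bullet> p) *\<^sub>R (a - b)"
    using assms by (simp add: Lagrange inner_diff_right algebra_simps)
  then have "norm (w \<times> ((a - p) \<times> (b - p))) = \<bar>w \<bullet> p - c\<bar> * dist a b"
    by (simp add: dist_norm abs_minus_commute)
  then show ?thesis
    using norm_cross_dot[of w "(a - p) \<times> (b - p)"]
    by (intro real_sqrt_unique[symmetric]) (simp_all add: add.commute)
qed

lemma real_sqrt_sum_squares_triangle_ineq4:
  "sqrt ((a0 + a1 + a2 + a3)\<^sup>2 + (b0 + b1 + b2 + b3)\<^sup>2)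
     \<le> sqrt (a0\<^sup>2 + b0\<^sup>2) + sqrt (a1\<^sup>2 + b1\<^sup>2) + sqrt (a2\<^sup>2 + b2\<^sup>2) + sqrt (a3\<^sup>2 + b3\<^sup>2)"
  by (rule real_sqrt_sum_squares_triangle_ineq[THEN order_trans], simp,
      rule real_sqrt_sum_squares_triangle_ineq[THEN order_trans], simp,
      rule real_sqrt_sum_squares_triangle_ineq[THEN order_trans]) simp

(* The normal of a lateral face splits into its component along w, whose four values add up to the
   base normal D, and an orthogonal component of length (height) * (base edge); apply Minkowski's
   inequality to these four pairs. *)
lemma pyramid_lateral_area_ge:
  assumes "w \<noteq> 0" and plane: "w \<bullet> v0 = c" "w \<bullet> v1 = c" "w \<bullet> v2 = c" "w \<bullet> v3 = c"
  defines "L \<equiv> dist v0 v1 + dist v1 v2 + dist v2 v3 + dist v3 v0"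
  shows "sqrt ((polygon_area [v0, v1, v2, v3])\<^sup>2 + (\<bar>w \<bullet> p - c\<bar> / norm w * L / 2)\<^sup>2)
    \<le> polygon_area [p, v0, v1] + polygon_area [p, v1, v2] + polygon_area [p, v2, v3] + polygon_area [p, v3, v0]"
proof -
  define F0 F1 F2 F3 where F_def:
    "F0 = (v0 - p) \<times> (v1 - p)" "F1 = (v1 - p) \<times> (v2 - p)"
    "F2 = (v2 - p) \<times> (v3 - p)" "F3 = (v3 - p) \<times> (v0 - p)"
  define D where "D = (v2 - v0) \<times> (v3 - v1)"
  define W where "W = norm w"
  define \<eta> where "\<eta> = \<bar>w \<bullet> p - c\<bar>"
  have W: "W > 0"
    using \<open>w \<noteq> 0\<close> by (simp add: W_def)
  have "w \<times> D = 0"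
    using plane by (simp add: D_def Lagrange inner_diff_right)
  then have "\<bar>w \<bullet> D\<bar>\<^sup>2 = (W * norm D)\<^sup>2"
    using norm_cross_dot[of w D] unfolding W_def by (simp only: norm_zero power2_abs) simp
  then have "\<bar>w \<bullet> D\<bar> = W * norm D"
    by (rule power2_eq_imp_eq) (simp_all add: W_def)
  moreover have "D = F0 + F1 + F2 + F3"
    by (simp add: F_def D_def cross3_def vec_eq_iff forall_3 algebra_simps)
  ultimately have projections: "W * norm D = \<bar>w \<bullet> F0 + w \<bullet> F1 + w \<bullet> F2 + w \<bullet> F3\<bar>"
    by (simp add: inner_add_right)
  have "W * sqrt ((norm D)\<^sup>2 + (\<eta> / W * L)\<^sup>2) = sqrt ((W * norm D)\<^sup>2 + (\<eta> * L)\<^sup>2)"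
  proof -
    have "(W * norm D)\<^sup>2 + (\<eta> * L)\<^sup>2 = W\<^sup>2 * ((norm D)\<^sup>2 + (\<eta> / W * L)\<^sup>2)"
      using W by (simp add: field_simps power2_eq_square)
    then show ?thesis
      using W by (simp add: real_sqrt_mult)
  qed
  also have "\<dots> = sqrt ((w \<bullet> F0 + w \<bullet> F1 + w \<bullet> F2 + w \<bullet> F3)\<^sup>2
              + (\<eta> * dist v0 v1 + \<eta> * dist v1 v2 + \<eta> * dist v2 v3 + \<eta> * dist v3 v0)\<^sup>2)"
    by (simp only: projections power2_abs L_def distrib_left)
  also have "\<dots> \<le> W * norm F0 + W * norm F1 + W * norm F2 + W * norm F3"
    unfolding F_def W_def \<eta>_def
    by (subst (1 2 3 4) norm_mult_norm_cross_apex[where c = c])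
      (simp_all add: plane real_sqrt_sum_squares_triangle_ineq4)
  finally have "sqrt ((norm D)\<^sup>2 + (\<eta> / W * L)\<^sup>2) \<le> norm F0 + norm F1 + norm F2 + norm F3"
    using W by (simp add: distrib_left[symmetric])
  moreover have "sqrt ((norm D)\<^sup>2 + (\<eta> / W * L)\<^sup>2) =
      2 * sqrt ((polygon_area [v0, v1, v2, v3])\<^sup>2 + (\<eta> / W * L / 2)\<^sup>2)"
  proof -
    have halve: "(norm D)\<^sup>2 + (\<eta> / W * L)\<^sup>2 = 2\<^sup>2 * ((norm D / 2)\<^sup>2 + (\<eta> / W * L / 2)\<^sup>2)"
      by (simp add: power_divide)
    show ?thesis
      unfolding halve real_sqrt_mult by (simp add: polygon_area_quadrilateral D_def)
  qed
  ultimately show ?thesis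
    by (simp add: polygon_area_triangle F_def W_def \<eta>_def)
qed

lemma surface_area_pyramid_ge:
  fixes p v0 v1 v2 v3 w :: "real^3"
  assumes "w \<noteq> 0" and plane: "w \<bullet> v0 = c" "w \<bullet> v1 = c" "w \<bullet> v2 = c" "w \<bullet> v3 = c"
  defines "B \<equiv> polygon_area [v0, v1, v2, v3]" and "H \<equiv> \<bar>w \<bullet> p - c\<bar> / norm w"
  shows "B + sqrt (B\<^sup>2 + 4 * B * H\<^sup>2) \<le> surface_area (pyramid_faces p v0 v1 v2 v3)"
proof -
  define L where "L = dist v0 v1 + dist v1 v2 + dist v2 v3 + dist v3 v0"
  have "(16 * B) * H\<^sup>2 \<le> L\<^sup>2 * H\<^sup>2"
    unfolding B_def L_def by (intro mult_right_mono quadrilateral_isoperimetric) simp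
  then have "4 * B * H\<^sup>2 \<le> (H * L / 2)\<^sup>2"
    by (simp add: power_mult_distrib power_divide algebra_simps)
  then have "sqrt (B\<^sup>2 + 4 * B * H\<^sup>2) \<le> sqrt (B\<^sup>2 + (H * L / 2)\<^sup>2)"
    by simp
  also have "\<dots> \<le> polygon_area [p, v0, v1] + polygon_area [p, v1, v2]
      + polygon_area [p, v2, v3] + polygon_area [p, v3, v0]"
    using pyramid_lateral_area_ge[OF assms(1) plane, of p] by (simp add: B_def H_def L_def)
  finally show ?thesis
    by (simp add: surface_area_def pyramid_faces_def B_def)
qed

lemma pyramid_surface_bound_cube_ge:
  fixes B H :: real
  assumes "B \<ge> 0"
  shows "32 * (B * H)\<^sup>2 \<le> (B + sqrt (B\<^sup>2 + 4 * B * H\<^sup>2))^3"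
proof -
  define S where "S = B + sqrt (B\<^sup>2 + 4 * B * H\<^sup>2)"
  have S: "S \<ge> 0"
    using assms by (simp add: S_def)
  have "(S - B)\<^sup>2 = B\<^sup>2 + 4 * B * H\<^sup>2"
    using assms by (simp add: S_def)
  then have "4 * (B * H)\<^sup>2 = S\<^sup>2 * B - 2 * S * B\<^sup>2"
    by (simp add: power2_eq_square algebra_simps)
  also have "\<dots> = S^3 / 8 - 2 * S * (B - S / 4)\<^sup>2"
    by (simp add: power2_eq_square power3_eq_cube algebra_simps)
  also have "\<dots> \<le> S^3 / 8"
    using S by simp
  finally show ?thesis
    by (simp add: S_def)
qed

lemma inner_cross_diagonals_eq:
  fixes v0 v1 v2 v3 z :: "real^3"
  assumes "z \<in> closed_segment v0 v2" "z \<in> closed_segment v1 v3"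
  defines "D \<equiv> (v2 - v0) \<times> (v3 - v1)"
  shows "D \<bullet> v1 = D \<bullet> v0" "D \<bullet> v2 = D \<bullet> v0" "D \<bullet> v3 = D \<bullet> v0"
proof -
  have "D \<bullet> (v2 - v0) = 0" "D \<bullet> (v3 - v1) = 0"
    by (simp_all add: D_def dot_cross_self)
  moreover obtain \<mu> \<kappa> where "z - v0 = \<mu> *\<^sub>R (v2 - v0)" "z - v1 = \<kappa> *\<^sub>R (v3 - v1)"
    using assms(1,2) by (auto simp: in_segment algebra_simps)
  ultimately have "D \<bullet> (z - v0) = 0" "D \<bullet> (z - v1) = 0"
    by simp_all
  with \<open>D \<bullet> (v2 - v0) = 0\<close> \<open>D \<bullet> (v3 - v1) = 0\<close> show
    "D \<bullet> v1 = D \<bullet> v0" "D \<bullet> v2 = D \<bullet> v0" "D \<bullet> v3 = D \<bullet> v0"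
    by (simp_all add: inner_diff_right)
qed

lemma cube_surface_area_unit_pyramid_ge:
  assumes "quad_pyramid p v0 v1 v2 v3" "solid_volume (pyramid_solid p v0 v1 v2 v3) = 1"
  shows "288 \<le> (surface_area (pyramid_faces p v0 v1 v2 v3))^3"
proof -
  obtain z where z: "z \<in> closed_segment v0 v2" "z \<in> closed_segment v1 v3"
    using assms(1) open_closed_segment unfolding quad_pyramid_def by blast
  define D where "D = (v2 - v0) \<times> (v3 - v1)"
  define B where "B = polygon_area [v0, v1, v2, v3]"
  define H where "H = \<bar>D \<bullet> p - D \<bullet> v0\<bar> / norm D"
  have volume: "1 \<le> \<bar>D \<bullet> (p - v0)\<bar> / 6"
    using measure_pyramid_le[OF z, of p] assms(2) by (simp add: solid_volume_def pyramid_solid_def D_def)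
  then have "D \<noteq> 0"
    by (intro notI) simp
  have plane: "D \<bullet> v1 = D \<bullet> v0" "D \<bullet> v2 = D \<bullet> v0" "D \<bullet> v3 = D \<bullet> v0"
    using inner_cross_diagonals_eq[OF z] by (simp_all add: D_def)
  have "3 \<le> B * H"
    using volume \<open>D \<noteq> 0\<close> by (simp add: B_def H_def D_def polygon_area_quadrilateral inner_diff_right)
  then have "288 \<le> 32 * (B * H)\<^sup>2"
    using power_mono[of 3 "B * H" 2] by simp
  also have "\<dots> \<le> (B + sqrt (B\<^sup>2 + 4 * B * H\<^sup>2))^3"
    by (rule pyramid_surface_bound_cube_ge) (simp add: B_def polygon_area_def)
  also have "\<dots> \<le> (surface_area (pyramid_faces p v0 v1 v2 v3))^3"
    using surface_area_pyramid_ge[OF \<open>D \<noteq> 0\<close> refl plane, of p]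
    by (intro power_mono) (simp_all add: B_def H_def polygon_area_def)
  finally show ?thesis .
qed

theorem proposition5p7:
  fixes a h :: real and p v0 v1 v2 v3 :: "real^3"
  assumes "a > 0" and "h > 0"
    and "solid_volume (prism_solid a h) = 1"
    and "circumscribed_about_sphere (prism_solid a h) (prism_faces a h)"
    and "quad_pyramid p v0 v1 v2 v3"
    and "solid_volume (pyramid_solid p v0 v1 v2 v3) = 1"
  shows "surface_area (prism_faces a h) < surface_area (pyramid_faces p v0 v1 v2 v3)"
proof (rule power_less_imp_less_base)
  show "(surface_area (prism_faces a h))^3 < (surface_area (pyramid_faces p v0 v1 v2 v3))^3"
    using cube_surface_area_circumscribed_prism_lt[OF assms(1-4)]
      cube_surface_area_unit_pyramid_ge[OF assms(5,6)] by linarith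
  show "0 \<le> surface_area (pyramid_faces p v0 v1 v2 v3)"
    by (simp add: surface_area_def pyramid_faces_def polygon_area_def)
qed

end
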